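(* Let $X\subseteq\{0,1\}^{\mathbb Z}$ be a subshift and let $a_{-n+1}a_{-n+2}\dots a_{-1}a_0$ ($n\ge2$) be a block of length $n$ in $\mathcal L(\tilde X)$. If $a_{-n+1}a_{-n+2}\dots a_0$ is significant, then both $0a_{-n+2}\dots a_{-1}a_0$ and $1a_{-n+2}\dots a_{-1}a_0$ are in $\mathcal L(\tilde X)$.
   Context: $\sigma$ is the shift $(\sigma x)_i=x_{i+1}$; a subshift is a nonempty closed $\sigma$-invariant set. $X^+$ denotes the set of right rays $x_0x_1\dots$ of points $x\in X$, and $\tilde X=\{x\in\{0,1\}^{\mathbb Z}: x_px_{p+1}\dots\in X^+\ \forall p\in\mathbb Z\}$ (which equals $X$). $\mathcal L(\tilde X)$ is the set of finite blocks occurring in points of $\tilde X$. For $a_{-n}\dots a_0\in\mathcal L(\tilde X)$, $\mathrm{fol}(a_{-n}\dots a_0)=\{b_0b_1\dots\in X^+:\exists b\in\tilde X,\ b_{-n}\dots b_0=a_{-n}\dots a_0\}$. A block $a_{-n}\dots a_0$ with $n\ge1$ is significant if $\mathrm{fol}(a_{-n}\dots a_0)\subsetneq\mathrm{fol}(a_{-n+1}\dots a_0)$. *)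

theory Defs
  imports "HOL-Analysis.Analysis"
begin

text \<open>Points of the full shift {0,1}^Z are functions int => nat with values in {0,1};
  the topology is the product topology (Function_Topology) over the discrete space nat.\<close>

definition full_shift :: "(int \<Rightarrow> nat) set" where
  "full_shift = {x. \<forall>i. x i \<in> {0,1}}"

definition shift :: "(int \<Rightarrow> nat) \<Rightarrow> (int \<Rightarrow> nat)" where
  "shift x = (\<lambda>i. x (i + 1))"

definition subshift :: "(int \<Rightarrow> nat) set \<Rightarrow> bool" where
  "subshift X \<longleftrightarrow> X \<subseteq> full_shift \<and> X \<noteq> {} \<and> closed X \<and> shift ` X = X"

definition ray :: "(int \<Rightarrow> nat) \<Rightarrow> int \<Rightarrow> (nat \<Rightarrow> nat)" where
  "ray x p = (\<lambda>k. x (p + int k))"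

definition rays :: "(int \<Rightarrow> nat) set \<Rightarrow> (nat \<Rightarrow> nat) set" where
  "rays X = {ray x 0 | x. x \<in> X}"

definition tilde :: "(int \<Rightarrow> nat) set \<Rightarrow> (int \<Rightarrow> nat) set" where
  "tilde X = {x \<in> full_shift. \<forall>p. ray x p \<in> rays X}"

definition occurs_at :: "nat list \<Rightarrow> (int \<Rightarrow> nat) \<Rightarrow> int \<Rightarrow> bool" where
  "occurs_at w x p \<longleftrightarrow> (\<forall>i < length w. x (p + int i) = w ! i)"

definition lang :: "(int \<Rightarrow> nat) set \<Rightarrow> nat list set" where
  "lang Y = {w. \<exists>x\<in>Y. \<exists>p. occurs_at w x p}"

text \<open>fol(a_{-n}...a_0): the list w = [a_{-n},...,a_0] is placed so that its last symbol
  sits at coordinate 0, i.e. it starts at coordinate 1 - length w.\<close>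
definition fol :: "(int \<Rightarrow> nat) set \<Rightarrow> nat list \<Rightarrow> (nat \<Rightarrow> nat) set" where
  "fol X w = {r \<in> rays X. \<exists>b \<in> tilde X. occurs_at w b (1 - int (length w)) \<and> r = ray b 0}"

definition significant :: "(int \<Rightarrow> nat) set \<Rightarrow> nat list \<Rightarrow> bool" where
  "significant X w \<longleftrightarrow> length w \<ge> 2 \<and> fol X w \<subset> fol X (tl w)"

end

theory Submission
  imports Defs
begin

text \<open>Every point realising a block w has some symbol c in {0,1} just before it, so fol(w) is
  the union of fol(0w) and fol(1w). If a = a_{-n+1} w is significant, a right ray in
  fol(w) outside fol(a) therefore lies in fol(c w) for the other symbol c, and c w
  occurs in a point of the extended shift, as does a itself. Only the fact that points take
  values in {0,1} is used.\<close>

lemma occurs_at_Cons: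
  "occurs_at (c # w) x p \<longleftrightarrow> x p = c \<and> occurs_at w x (p + 1)"
proof
  assume occ: "occurs_at (c # w) x p"
  have "x (p + 1 + int i) = w ! i" if "i < length w" for i
    using occ that unfolding occurs_at_def
    by (metis add.commute add.left_commute length_Cons not_less_eq nth_Cons_Suc of_nat_Suc)
  with occ show "x p = c \<and> occurs_at w x (p + 1)"
    unfolding occurs_at_def by (metis add.right_neutral length_Cons nth_Cons_0 of_nat_0 zero_less_Suc)
next
  assume "x p = c \<and> occurs_at w x (p + 1)"
  then show "occurs_at (c # w) x p"
    unfolding occurs_at_def by (auto simp: nth_Cons algebra_simps split: nat.split)
qed

lemma tilde_subset_full_shift: "tilde X \<subseteq> full_shift"
  unfolding tilde_def by blast

lemma hd_in_lang_tilde_binary: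
  assumes "c # w \<in> lang (tilde X)"
  shows "c \<in> {0, 1}"
proof -
  obtain x p where "x \<in> tilde X" and "occurs_at (c # w) x p"
    using assms unfolding lang_def by blast
  then have "x \<in> full_shift" and "x p = c"
    using tilde_subset_full_shift by (auto simp: occurs_at_Cons)
  then show ?thesis
    unfolding full_shift_def by (metis (mono_tags) mem_Collect_eq)
qed

lemma fol_nonempty_imp_in_lang:
  assumes "fol X w \<noteq> {}"
  shows "w \<in> lang (tilde X)"
  using assms unfolding fol_def lang_def by blast

lemma fol_subset_fol_Cons:
  "fol X w \<subseteq> (\<Union>c\<in>{0, 1}. fol X (c # w))"
proof
  fix r assume "r \<in> fol X w"
  then obtain b where r: "r \<in> rays X" "r = ray b 0" and b: "b \<in> tilde X"
    and occ: "occurs_at w b (1 - int (length w))"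
    unfolding fol_def by blast
  define c where "c = b (- int (length w))"
  have "c \<in> {0, 1}"
    using b tilde_subset_full_shift unfolding c_def full_shift_def by blast
  moreover have "occurs_at (c # w) b (1 - int (length (c # w)))"
    using occ by (simp add: occurs_at_Cons c_def)
  ultimately show "r \<in> (\<Union>c\<in>{0, 1}. fol X (c # w))"
    using r b unfolding fol_def by blast
qed

lemma significant_other_symbol:
  assumes "significant X (a # w)"
  obtains c where "c \<in> {0, 1}" "c \<noteq> a" "c # w \<in> lang (tilde X)"
proof -
  obtain r where "r \<in> fol X w" and r_not: "r \<notin> fol X (a # w)"
    using assms unfolding significant_def by auto
  then obtain c where "c \<in> {0, 1}" and "r \<in> fol X (c # w)"
    using fol_subset_fol_Cons by blast
  moreover from this r_not have "c \<noteq> a" by blast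
  ultimately show ?thesis
    using that fol_nonempty_imp_in_lang by blast
qed

theorem proposition4p6:
  fixes X :: "(int \<Rightarrow> nat) set" and a :: "nat list" and n :: nat
  assumes "subshift X"
    and "n \<ge> 2"
    and "length a = n"
    and "a \<in> lang (tilde X)"
    and "significant X a"
  shows "(0 # tl a) \<in> lang (tilde X) \<and> (1 # tl a) \<in> lang (tilde X)"
proof -
  have a: "a = hd a # tl a"
    using assms(2,3) by (cases a) auto
  then have "hd a \<in> {0, 1}"
    using assms(4) hd_in_lang_tilde_binary by metis
  moreover obtain c where "c \<in> {0, 1}" "c \<noteq> hd a" "c # tl a \<in> lang (tilde X)"
    using assms(5) a significant_other_symbol by metis
  ultimately show ?thesis
    using assms(4) a by auto
qed

end
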